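(* Let $\mathbf{A}\in\mathbb{C}^{M\times N_a}$, $\mathbf{B}\in\mathbb{C}^{M\times N_b}$ have unit-$\ell_2$-norm columns with coherence parameters $\mu_a,\mu_b,\mu_m$. Let $\mathcal{E}\subseteq\{1,\dots,N_b\}$, $|\mathcal{E}|=n_e$, with $1-\mu_b(n_e-1)>0$, let $\mathbf{R}_{\mathcal{E}}=\mathbf{I}_M-\mathbf{B}_{\mathcal{E}}\mathbf{B}_{\mathcal{E}}^\dagger$ and let $\tilde{\mathbf{a}}_i=\mathbf{R}_{\mathcal{E}}\mathbf{a}_i$ be the columns of $\mathbf{R}_{\mathcal{E}}\mathbf{A}$. Then for all $i\ne j$ $$|\tilde{\mathbf{a}}_i^H\tilde{\mathbf{a}}_j|\le\mu_a+\frac{n_e\mu_m^2}{1-\mu_b(n_e-1)},$$ and for all $i$ $$\|\tilde{\mathbf{a}}_i\|_2^2\ge1-\frac{n_e\mu_m^2}{1-\mu_b(n_e-1)}.$$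
   Context: Coherence parameters: $\mu_a=\max_{k\ne\ell}|\mathbf{a}_k^H\mathbf{a}_\ell|$, $\mu_b=\max_{k\ne\ell}|\mathbf{b}_k^H\mathbf{b}_\ell|$, $\mu_m=\max_{k,\ell}|\mathbf{a}_k^H\mathbf{b}_\ell|$. $\mathbf{B}_{\mathcal{E}}$ is the column submatrix of $\mathbf{B}$ indexed by $\mathcal{E}$; $\mathbf{M}^\dagger=(\mathbf{M}^H\mathbf{M})^{-1}\mathbf{M}^H$. *)

theory Defs
  imports "Jordan_Normal_Form.Gauss_Jordan_Elimination" "Jordan_Normal_Form.Schur_Decomposition"
begin

definition hprod :: "complex vec \<Rightarrow> complex vec \<Rightarrow> complex" where
  "hprod a b = conjugate a \<bullet> b"

definition vnorm2 :: "complex vec \<Rightarrow> real" where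
  "vnorm2 v = (\<Sum>k<dim_vec v. (cmod (v $ k))^2)"

definition mu_self :: "complex mat \<Rightarrow> real" where
  "mu_self A = Max (insert 0 {cmod (hprod (col A k) (col A l)) | k l.
      k < dim_col A \<and> l < dim_col A \<and> k \<noteq> l})"

definition mu_mutual :: "complex mat \<Rightarrow> complex mat \<Rightarrow> real" where
  "mu_mutual A B = Max (insert 0 {cmod (hprod (col A k) (col B l)) | k l.
      k < dim_col A \<and> l < dim_col B})"

definition col_submat :: "complex mat \<Rightarrow> nat set \<Rightarrow> complex mat" where
  "col_submat B E = mat_of_cols (dim_row B) (map (col B) (sorted_list_of_set E))"

(* Moore-Penrose pseudoinverse for full column rank: (M^H M)^{-1} M^H *)
definition pinv :: "complex mat \<Rightarrow> complex mat" where
  "pinv M = the (mat_inverse (mat_adjoint M * M)) * mat_adjoint M"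

definition resid_proj :: "complex mat \<Rightarrow> nat set \<Rightarrow> complex mat" where
  "resid_proj B E = 1\<^sub>m (dim_row B) - col_submat B E * pinv (col_submat B E)"

end

theory Submission
  imports Defs
begin

(* Write R = I - B_E B_E^dagger and G = B_E^H B_E for the Gram matrix of B_E.  For columns
   a, a' of A put w = B_E^H a, w' = B_E^H a'.  Since B_E^dagger = G^{-1} B_E^H one has the identity
       (R a)^H (R a') = a^H a' - w^H G^{-1} w'.
   The entries of w are inner products a^H b_l with l in E, so |w|^2 <= n_e mu_m^2.  The Gram
   matrix has unit diagonal and off-diagonal entries of modulus at most mu_b, hence (a
   Gershgorin-type estimate) x^H G x >= lambda |x|^2 with lambda = 1 - mu_b (n_e - 1) > 0.  This
   makes G invertible and gives |w^H G^{-1} w'| <= |w| |w'| / lambda and w^H G^{-1} w <= |w|^2 /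
   lambda.  Both claims of the theorem follow with |a^H a'| <= mu_a and |a|^2 = 1. *)

lemma hprod_expand:
  assumes "dim_vec u = dim_vec v"
  shows "hprod u v = (\<Sum>k<dim_vec v. cnj (u $ k) * v $ k)"
  using assms unfolding hprod_def scalar_prod_def by (auto simp: lessThan_atLeast0)

lemma hprod_cnj: "u \<in> carrier_vec n \<Longrightarrow> v \<in> carrier_vec n \<Longrightarrow> cnj (hprod u v) = hprod v u"
  unfolding hprod_def using conjugate_conjugate_sprod conjugate_vec_sprod_comm
  by (metis conjugate_complex_def)

lemma hprod_cmod_sym: "u \<in> carrier_vec n \<Longrightarrow> v \<in> carrier_vec n \<Longrightarrow> cmod (hprod u v) = cmod (hprod v u)"
  by (metis complex_mod_cnj hprod_cnj)

lemma hprod_self: "hprod v v = complex_of_real (vnorm2 v)"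
  unfolding hprod_expand[OF refl] vnorm2_def of_real_sum
  by (intro sum.cong refl) (metis complex_norm_square mult.commute)

lemma vnorm2_nonneg: "vnorm2 v \<ge> 0"
  unfolding vnorm2_def by (auto intro: sum_nonneg)

lemma vnorm2_zero:
  assumes "v \<in> carrier_vec n" and "vnorm2 v = 0"
  shows "v = 0\<^sub>v n"
proof (rule eq_vecI)
  fix i assume "i < dim_vec (0\<^sub>v n)"
  hence i: "i < dim_vec v" using assms by auto
  have "\<forall>k\<in>{..<dim_vec v}. (cmod (v $ k))^2 = 0"
    using assms(2) unfolding vnorm2_def by (subst sum_nonneg_eq_0_iff[symmetric]) auto
  thus "v $ i = 0\<^sub>v n $ i" using i assms by auto
qed (use assms in auto)

(* Cauchy-Schwarz for finite real sums, via Lagrange's identity. *)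
lemma real_cauchy_schwarz:
  fixes a b :: "nat \<Rightarrow> real"
  shows "(\<Sum>k\<in>A. a k * b k)^2 \<le> (\<Sum>k\<in>A. (a k)^2) * (\<Sum>k\<in>A. (b k)^2)"
proof -
  have "0 \<le> (\<Sum>i\<in>A. \<Sum>j\<in>A. (a i * b j - a j * b i)^2)" by (intro sum_nonneg) auto
  also have "\<dots> = (\<Sum>i\<in>A. \<Sum>j\<in>A. (a i)^2 * (b j)^2 + (a j)^2 * (b i)^2 - 2 * ((a i * b i) * (a j * b j)))"
    by (intro sum.cong refl) (simp add: power2_eq_square algebra_simps)
  also have "\<dots> = (\<Sum>i\<in>A. \<Sum>j\<in>A. (a i)^2 * (b j)^2) + (\<Sum>i\<in>A. \<Sum>j\<in>A. (a j)^2 * (b i)^2)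
        - 2 * (\<Sum>i\<in>A. \<Sum>j\<in>A. (a i * b i) * (a j * b j))"
    by (simp add: sum_subtractf sum.distrib sum_distrib_left)
  also have "(\<Sum>i\<in>A. \<Sum>j\<in>A. (a j)^2 * (b i)^2) = (\<Sum>i\<in>A. \<Sum>j\<in>A. (a i)^2 * (b j)^2)"
    by (rule sum.swap)
  also have "(\<Sum>i\<in>A. \<Sum>j\<in>A. (a i)^2 * (b j)^2) = (\<Sum>k\<in>A. (a k)^2) * (\<Sum>k\<in>A. (b k)^2)"
    by (rule sum_product[symmetric])
  also have "(\<Sum>i\<in>A. \<Sum>j\<in>A. (a i * b i) * (a j * b j)) = (\<Sum>k\<in>A. a k * b k)^2"
    by (simp only: power2_eq_square sum_product)
  finally show ?thesis by simp
qed

lemma hprod_cauchy_schwarz: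
  assumes "u \<in> carrier_vec n" and "v \<in> carrier_vec n"
  shows "(cmod (hprod u v))^2 \<le> vnorm2 u * vnorm2 v"
proof -
  have "cmod (hprod u v) = cmod (\<Sum>k<n. cnj (u $ k) * v $ k)"
    using assms hprod_expand[of u v] by auto
  also have "\<dots> \<le> (\<Sum>k<n. cmod (u $ k) * cmod (v $ k))"
    using norm_sum[of "\<lambda>k. cnj (u $ k) * v $ k"] by (simp add: norm_mult)
  finally have "(cmod (hprod u v))^2 \<le> (\<Sum>k<n. cmod (u $ k) * cmod (v $ k))^2"
    by (simp add: power_mono)
  also have "\<dots> \<le> vnorm2 u * vnorm2 v"
    unfolding vnorm2_def using assms real_cauchy_schwarz by auto
  finally show ?thesis .
qed

lemma hprod_diff:
  assumes "u \<in> carrier_vec m" "v \<in> carrier_vec m" "u' \<in> carrier_vec m" "v' \<in> carrier_vec m"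
  shows "hprod (u - v) (u' - v') = hprod u u' - hprod u v' - (hprod v u' - hprod v v')"
proof -
  have "conjugate (u - v) = conjugate u - conjugate v"
    using assms by (intro eq_vecI) auto
  thus ?thesis
    unfolding hprod_def using assms
    by (simp add: minus_scalar_prod_distrib[of _ m] scalar_prod_minus_distrib[of _ m])
qed

lemma mat_adjoint_carrier: "C \<in> carrier_mat m n \<Longrightarrow> mat_adjoint C \<in> carrier_mat n m"
  unfolding mat_adjoint_def by auto

lemma mat_adjoint_index:
  "C \<in> carrier_mat m n \<Longrightarrow> i < n \<Longrightarrow> j < m \<Longrightarrow> mat_adjoint C $$ (i,j) = cnj (C $$ (j,i))"
  unfolding mat_adjoint_def by (auto simp: mat_of_rows_index)

lemma mat_adjoint_mult_vec_index:
  assumes "C \<in> carrier_mat m n" and "y \<in> carrier_vec m" and "k < n"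
  shows "(mat_adjoint C *\<^sub>v y) $ k = hprod (col C k) y"
  unfolding mat_adjoint_def hprod_def using assms by auto

lemma gram_index:
  assumes "C \<in> carrier_mat m n" and "k < n" and "l < n"
  shows "(mat_adjoint C * C) $$ (k,l) = hprod (col C k) (col C l)"
  unfolding mat_adjoint_def hprod_def using assms by auto

lemma hprod_adjoint:
  fixes C :: "complex mat"
  assumes C: "C \<in> carrier_mat m n" and x: "x \<in> carrier_vec n" and y: "y \<in> carrier_vec m"
  shows "hprod (C *\<^sub>v x) y = hprod x (mat_adjoint C *\<^sub>v y)"
proof -
  have Ca: "mat_adjoint C \<in> carrier_mat n m" using mat_adjoint_carrier[OF C] .
  have "hprod (C *\<^sub>v x) y = (\<Sum>j<m. cnj (\<Sum>i<n. C $$ (j,i) * x $ i) * y $ j)"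
    using C x y
    by (auto simp: hprod_def scalar_prod_def mult_mat_vec_def row_def lessThan_atLeast0 intro!: sum.cong)
  also have "\<dots> = (\<Sum>i<n. \<Sum>j<m. cnj (C $$ (j,i)) * cnj (x $ i) * y $ j)"
    by (simp add: sum_distrib_right sum.swap[of _ "{..<m}"])
  also have "\<dots> = (\<Sum>i<n. cnj (x $ i) * (\<Sum>j<m. cnj (C $$ (j,i)) * y $ j))"
    by (simp add: sum_distrib_left mult_ac)
  also have "\<dots> = hprod x (mat_adjoint C *\<^sub>v y)"
    using C x y Ca
    by (auto simp: hprod_def scalar_prod_def mult_mat_vec_def row_def lessThan_atLeast0
        mat_adjoint_index intro!: sum.cong)
  finally show ?thesis .
qed

lemma hprod_adjoint':
  fixes C :: "complex mat"
  assumes C: "C \<in> carrier_mat m n" and x: "x \<in> carrier_vec n" and y: "y \<in> carrier_vec m"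
  shows "hprod y (C *\<^sub>v x) = hprod (mat_adjoint C *\<^sub>v y) x"
proof -
  have Ca: "mat_adjoint C \<in> carrier_mat n m" using mat_adjoint_carrier[OF C] .
  have "hprod y (C *\<^sub>v x) = cnj (hprod (C *\<^sub>v x) y)"
    using hprod_cnj[of "C *\<^sub>v x" m y] C x y by auto
  also have "\<dots> = cnj (hprod x (mat_adjoint C *\<^sub>v y))" by (simp add: hprod_adjoint[OF C x y])
  also have "\<dots> = hprod (mat_adjoint C *\<^sub>v y) x" using hprod_cnj[of x n] Ca x y by auto
  finally show ?thesis .
qed

lemma offdiagonal_pair_sum:
  fixes a :: "nat \<Rightarrow> real"
  shows "(\<Sum>k<n. \<Sum>l\<in>{..<n}-{k}. \<mu> * ((a k)^2 + (a l)^2) / 2) = \<mu> * (real n - 1) * (\<Sum>k<n. (a k)^2)"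
proof -
  define S where "S = (\<Sum>k<n. (a k)^2)"
  have row: "(\<Sum>l\<in>{..<n}-{k}. \<mu> * ((a k)^2 + (a l)^2) / 2)
      = \<mu> / 2 * (real n - 2) * (a k)^2 + \<mu> / 2 * S" if "k < n" for k
  proof -
    have "(\<Sum>l\<in>{..<n}-{k}. \<mu> * ((a k)^2 + (a l)^2) / 2)
        = \<mu> / 2 * ((\<Sum>l\<in>{..<n}-{k}. (a k)^2) + (\<Sum>l\<in>{..<n}-{k}. (a l)^2))"
      by (simp add: sum.distrib sum_distrib_left[symmetric] sum_divide_distrib[symmetric])
    also have "\<dots> = \<mu> / 2 * (real (n - 1) * (a k)^2 + (S - (a k)^2))"
      using that unfolding S_def by (simp add: sum_diff1)
    finally show ?thesis using that by (simp add: of_nat_diff algebra_simps)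
  qed
  have "(\<Sum>k<n. \<Sum>l\<in>{..<n}-{k}. \<mu> * ((a k)^2 + (a l)^2) / 2)
      = (\<Sum>k<n. \<mu> / 2 * (real n - 2) * (a k)^2 + \<mu> / 2 * S)"
    using row by (intro sum.cong) auto
  also have "\<dots> = \<mu> / 2 * (real n - 2) * S + real n * (\<mu> / 2 * S)"
    by (simp add: sum.distrib sum_distrib_left S_def)
  also have "\<dots> = \<mu> * (real n - 1) * S" by (simp add: algebra_simps)
  finally show ?thesis unfolding S_def .
qed

(* Gershgorin-type bound: a quadratic form with unit diagonal and off-diagonal entries of
   modulus at most mu is bounded below by (1 - mu (n-1)) |x|^2; each cross term is estimated
   by |x_k| |x_l| <= (|x_k|^2 + |x_l|^2)/2. *)
lemma quadratic_form_lower_bound: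
  fixes c :: "nat \<Rightarrow> nat \<Rightarrow> complex" and x :: "nat \<Rightarrow> complex"
  assumes diag: "\<And>k. k < n \<Longrightarrow> c k k = 1"
    and off: "\<And>k l. k < n \<Longrightarrow> l < n \<Longrightarrow> k \<noteq> l \<Longrightarrow> cmod (c k l) \<le> \<mu>"
    and mu: "\<mu> \<ge> 0"
  shows "(1 - \<mu> * (real n - 1)) * (\<Sum>k<n. (cmod (x k))^2)
           \<le> Re (\<Sum>k<n. cnj (x k) * (\<Sum>l<n. c k l * x l))"
proof -
  define a where "a k = cmod (x k)" for k
  define cross where "cross k = (\<Sum>l\<in>{..<n}-{k}. cnj (x k) * c k l * x l)" for k
  have split: "cnj (x k) * (\<Sum>l<n. c k l * x l) = of_real ((a k)^2) + cross k" if k: "k < n" for k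
  proof -
    have "(\<Sum>l<n. c k l * x l) = c k k * x k + (\<Sum>l\<in>{..<n}-{k}. c k l * x l)"
      using k by (subst sum.remove[of _ k]) auto
    moreover have "cnj (x k) * x k = of_real ((a k)^2)"
      unfolding a_def by (metis complex_norm_square mult.commute of_real_power)
    ultimately show ?thesis using diag k unfolding cross_def
      by (simp add: distrib_left sum_distrib_left mult.assoc)
  qed
  have cross_bound: "- (\<Sum>l\<in>{..<n}-{k}. \<mu> * ((a k)^2 + (a l)^2) / 2) \<le> Re (cross k)"
    if k: "k < n" for k
  proof -
    have "cmod (cross k) \<le> (\<Sum>l\<in>{..<n}-{k}. cmod (cnj (x k) * c k l * x l))"
      unfolding cross_def by (rule norm_sum)
    also have "\<dots> \<le> (\<Sum>l\<in>{..<n}-{k}. \<mu> * ((a k)^2 + (a l)^2) / 2)"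
    proof (rule sum_mono)
      fix l assume l: "l \<in> {..<n}-{k}"
      have "cmod (cnj (x k) * c k l * x l) = cmod (c k l) * (a k * a l)"
        unfolding a_def by (simp add: norm_mult)
      also have "\<dots> \<le> \<mu> * (a k * a l)"
        using off[of k l] k l unfolding a_def by (intro mult_right_mono) auto
      also have "\<dots> \<le> \<mu> * ((a k)^2 + (a l)^2) / 2"
        using mult_left_mono[OF sum_squares_bound[of "a k" "a l"] mu] by simp
      finally show "cmod (cnj (x k) * c k l * x l) \<le> \<mu> * ((a k)^2 + (a l)^2) / 2" .
    qed
    finally show ?thesis using abs_Re_le_cmod[of "cross k"] by linarith
  qed
  have "(1 - \<mu> * (real n - 1)) * (\<Sum>k<n. (a k)^2)
      = (\<Sum>k<n. (a k)^2) - (\<Sum>k<n. \<Sum>l\<in>{..<n}-{k}. \<mu> * ((a k)^2 + (a l)^2) / 2)"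
    unfolding offdiagonal_pair_sum by (simp add: algebra_simps)
  also have "\<dots> = (\<Sum>k<n. (a k)^2 - (\<Sum>l\<in>{..<n}-{k}. \<mu> * ((a k)^2 + (a l)^2) / 2))"
    by (simp only: sum_subtractf)
  also have "\<dots> \<le> (\<Sum>k<n. (a k)^2 + Re (cross k))"
    using cross_bound by (intro sum_mono) fastforce
  also have "\<dots> = Re (\<Sum>k<n. cnj (x k) * (\<Sum>l<n. c k l * x l))"
    using split by (simp add: Re_sum)
  finally show ?thesis unfolding a_def .
qed

(* If G x = w with lm |x|^2 <= Re (w^H x), then Cauchy-Schwarz gives Re (w^H x) <= |w|^2/lm and
   |x|^2 <= |w|^2/lm^2; this is the real-number core of that argument. *)
lemma inverse_form_bounds_real:
  fixes lm X W Q c :: real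
  assumes lm: "lm > 0" and X: "X \<ge> 0" and W: "W \<ge> 0"
    and Qx: "lm * X \<le> Q" and Qc: "Q \<le> c" and c: "c^2 \<le> X * W"
  shows "Q \<le> W / lm \<and> X \<le> W / lm^2"
proof -
  have Q0: "Q \<ge> 0" using lm X Qx by (meson mult_nonneg_nonneg less_imp_le order_trans)
  have "Q^2 \<le> c^2" using Q0 Qc by (simp add: power_mono)
  hence QQ: "Q * Q \<le> X * W" using c by (simp add: power2_eq_square)
  show ?thesis
  proof (cases "X = 0")
    case True
    hence "Q = 0" using QQ Q0 by (simp add: mult_le_0_iff)
    thus ?thesis using True lm W by simp
  next
    case False
    hence Xp: "X > 0" using X by simp
    have "lm * X * Q \<le> X * W" using QQ mult_right_mono[OF Qx Q0] by simp
    hence "lm * Q \<le> W" using Xp by (simp add: mult.assoc)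
    hence q: "Q \<le> W / lm" using lm by (simp add: field_simps)
    have "lm * X * lm \<le> Q * lm" using mult_right_mono[OF Qx] lm by simp
    hence "X * lm^2 \<le> W" using \<open>lm * Q \<le> W\<close> by (simp add: power2_eq_square algebra_simps)
    hence "X \<le> W / lm^2" using lm by (simp add: field_simps)
    thus ?thesis using q by simp
  qed
qed

lemma hprod_residual:
  fixes C Gi :: "complex mat"
  assumes C: "C \<in> carrier_mat m n" and Gi: "Gi \<in> carrier_mat n n"
    and inv: "(mat_adjoint C * C) * Gi = 1\<^sub>m n"
    and a: "a \<in> carrier_vec m" and a': "a' \<in> carrier_vec m"
  shows "hprod (a - C *\<^sub>v (Gi *\<^sub>v (mat_adjoint C *\<^sub>v a))) (a' - C *\<^sub>v (Gi *\<^sub>v (mat_adjoint C *\<^sub>v a')))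
       = hprod a a' - hprod (mat_adjoint C *\<^sub>v a) (Gi *\<^sub>v (mat_adjoint C *\<^sub>v a'))"
proof -
  have Ca: "mat_adjoint C \<in> carrier_mat n m" using mat_adjoint_carrier[OF C] .
  define w where "w = mat_adjoint C *\<^sub>v a"
  define w' where "w' = mat_adjoint C *\<^sub>v a'"
  define x where "x = Gi *\<^sub>v w"
  define x' where "x' = Gi *\<^sub>v w'"
  have w: "w \<in> carrier_vec n" "w' \<in> carrier_vec n" using Ca a a' unfolding w_def w'_def by auto
  have x: "x \<in> carrier_vec n" "x' \<in> carrier_vec n" using Gi w unfolding x_def x'_def by auto
  have "(mat_adjoint C * C) *\<^sub>v x' = ((mat_adjoint C * C) * Gi) *\<^sub>v w'"
    unfolding x'_def using Ca C Gi w by (subst assoc_mult_mat_vec[of _ n n _ n]) auto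
  moreover have "mat_adjoint C *\<^sub>v (C *\<^sub>v x') = (mat_adjoint C * C) *\<^sub>v x'"
    using Ca C x by (subst assoc_mult_mat_vec[of _ n m _ n]) auto
  ultimately have CCx': "mat_adjoint C *\<^sub>v (C *\<^sub>v x') = w'" using inv w by simp
  have "hprod a (C *\<^sub>v x') = hprod w x'"
    unfolding w_def by (rule hprod_adjoint'[OF C x(2) a])
  moreover have "hprod (C *\<^sub>v x) a' = hprod x w'"
    unfolding w'_def by (rule hprod_adjoint[OF C x(1) a'])
  moreover have "hprod (C *\<^sub>v x) (C *\<^sub>v x') = hprod x w'"
    using hprod_adjoint[OF C x(1), of "C *\<^sub>v x'"] C x(2) unfolding CCx' by simp
  ultimately have "hprod (a - C *\<^sub>v x) (a' - C *\<^sub>v x') = hprod a a' - hprod w x'"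
    using hprod_diff[of a m "C *\<^sub>v x" a' "C *\<^sub>v x'"] C a a' x by simp
  thus ?thesis unfolding x_def x'_def w_def w'_def .
qed

context
  fixes C :: "complex mat" and m n :: nat and lm :: real
  assumes C: "C \<in> carrier_mat m n" and lm: "lm > 0"
    and gram_lower: "\<And>x. x \<in> carrier_vec n \<Longrightarrow> lm * vnorm2 x \<le> Re (hprod x ((mat_adjoint C * C) *\<^sub>v x))"
begin

lemma gram_inverse:
  obtains Gi where "Gi \<in> carrier_mat n n" and "(mat_adjoint C * C) * Gi = 1\<^sub>m n"
    and "pinv C = Gi * mat_adjoint C"
proof -
  let ?G = "mat_adjoint C * C"
  have G: "?G \<in> carrier_mat n n" using mat_adjoint_carrier[OF C] C by auto
  have det: "det ?G \<noteq> 0"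
  proof
    assume "det ?G = 0"
    then obtain v where v: "v \<in> carrier_vec n" "v \<noteq> 0\<^sub>v n" "?G *\<^sub>v v = 0\<^sub>v n"
      using det_0_iff_vec_prod_zero_field[OF G] by auto
    have "hprod v (0\<^sub>v n) = 0" using v unfolding hprod_def by simp
    hence "lm * vnorm2 v \<le> 0" using gram_lower[OF v(1)] v(3) by simp
    hence "vnorm2 v = 0" using lm vnorm2_nonneg[of v] by (simp add: mult_le_0_iff)
    thus False using vnorm2_zero[OF v(1)] v(2) by simp
  qed
  obtain Gi where Gi: "mat_inverse ?G = Some Gi"
    using mat_inverse(1)[OF G _, of "()"] det_non_zero_imp_unit[OF G det, of "()"]
    by (cases "mat_inverse ?G") auto
  show ?thesis
    by (rule that) (use mat_inverse(2)[OF G Gi] in \<open>auto simp: pinv_def Gi\<close>)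
qed

lemma gram_inverse_bounds:
  assumes Gi: "Gi \<in> carrier_mat n n" and inv: "(mat_adjoint C * C) * Gi = 1\<^sub>m n"
    and w: "w \<in> carrier_vec n"
  shows "Re (hprod w (Gi *\<^sub>v w)) \<le> vnorm2 w / lm \<and> vnorm2 (Gi *\<^sub>v w) \<le> vnorm2 w / lm^2"
proof -
  define x where "x = Gi *\<^sub>v w"
  have x: "x \<in> carrier_vec n" using Gi w unfolding x_def by auto
  have "(mat_adjoint C * C) *\<^sub>v x = ((mat_adjoint C * C) * Gi) *\<^sub>v w"
    unfolding x_def using mat_adjoint_carrier[OF C] C Gi w
    by (subst assoc_mult_mat_vec[of _ n n _ n]) auto
  hence Gx: "(mat_adjoint C * C) *\<^sub>v x = w" using inv w by simp
  have "Re (hprod w x) = Re (hprod x w)"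
    using arg_cong[OF hprod_cnj[OF x w], of Re] by simp
  hence Qx: "lm * vnorm2 x \<le> Re (hprod w x)" using gram_lower[OF x] Gx by simp
  from inverse_form_bounds_real[OF lm vnorm2_nonneg vnorm2_nonneg Qx complex_Re_le_cmod]
    hprod_cauchy_schwarz[OF w x]
  show ?thesis unfolding x_def by (simp add: mult.commute)
qed

lemma residual_hprod:
  assumes Gi: "Gi \<in> carrier_mat n n" and inv: "(mat_adjoint C * C) * Gi = 1\<^sub>m n"
    and pinv: "pinv C = Gi * mat_adjoint C"
    and a: "a \<in> carrier_vec m" and a': "a' \<in> carrier_vec m"
  shows "hprod ((1\<^sub>m m - C * pinv C) *\<^sub>v a) ((1\<^sub>m m - C * pinv C) *\<^sub>v a')
       = hprod a a' - hprod (mat_adjoint C *\<^sub>v a) (Gi *\<^sub>v (mat_adjoint C *\<^sub>v a'))"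
proof -
  have apply_R: "(1\<^sub>m m - C * pinv C) *\<^sub>v b = b - C *\<^sub>v (Gi *\<^sub>v (mat_adjoint C *\<^sub>v b))"
    if b: "b \<in> carrier_vec m" for b
    unfolding pinv using C Gi mat_adjoint_carrier[OF C] b
    by (subst minus_mult_distrib_mat_vec[of _ m m]) (auto simp: assoc_mult_mat_vec[of _ m n _ m])
  show ?thesis
    unfolding apply_R[OF a] apply_R[OF a'] by (rule hprod_residual[OF C Gi inv a a'])
qed

lemma residual_cross_bound:
  assumes a: "a \<in> carrier_vec m" and a': "a' \<in> carrier_vec m"
    and Wa: "vnorm2 (mat_adjoint C *\<^sub>v a) \<le> W" and Wa': "vnorm2 (mat_adjoint C *\<^sub>v a') \<le> W"
  shows "cmod (hprod ((1\<^sub>m m - C * pinv C) *\<^sub>v a) ((1\<^sub>m m - C * pinv C) *\<^sub>v a'))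
           \<le> cmod (hprod a a') + W / lm"
proof -
  obtain Gi where Gi: "Gi \<in> carrier_mat n n" and inv: "(mat_adjoint C * C) * Gi = 1\<^sub>m n"
    and pinv: "pinv C = Gi * mat_adjoint C"
    using gram_inverse by blast
  define w where "w = mat_adjoint C *\<^sub>v a"
  define w' where "w' = mat_adjoint C *\<^sub>v a'"
  have w: "w \<in> carrier_vec n" "w' \<in> carrier_vec n"
    using mat_adjoint_carrier[OF C] a a' unfolding w_def w'_def by auto
  have W0: "W \<ge> 0" using Wa vnorm2_nonneg order_trans by blast
  have "(cmod (hprod w (Gi *\<^sub>v w')))^2 \<le> vnorm2 w * vnorm2 (Gi *\<^sub>v w')"
    using hprod_cauchy_schwarz[of w n "Gi *\<^sub>v w'"] Gi w by auto
  also have "\<dots> \<le> W * (W / lm^2)"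
  proof (rule mult_mono)
    show "vnorm2 (Gi *\<^sub>v w') \<le> W / lm^2"
      using gram_inverse_bounds[OF Gi inv w(2)] divide_right_mono[OF Wa', of "lm^2"]
      unfolding w'_def by simp
  qed (use Wa vnorm2_nonneg W0 in \<open>auto simp: w_def\<close>)
  also have "\<dots> = (W / lm)^2" by (simp add: power2_eq_square)
  finally have "cmod (hprod w (Gi *\<^sub>v w')) \<le> W / lm"
    using power2_le_imp_le W0 lm by simp
  thus ?thesis
    unfolding residual_hprod[OF Gi inv pinv a a'] w_def[symmetric] w'_def[symmetric]
    using norm_triangle_ineq4[of "hprod a a'" "hprod w (Gi *\<^sub>v w')"] by linarith
qed

lemma residual_norm_bound:
  assumes a: "a \<in> carrier_vec m" and Wa: "vnorm2 (mat_adjoint C *\<^sub>v a) \<le> W"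
  shows "vnorm2 a - W / lm \<le> vnorm2 ((1\<^sub>m m - C * pinv C) *\<^sub>v a)"
proof -
  obtain Gi where Gi: "Gi \<in> carrier_mat n n" and inv: "(mat_adjoint C * C) * Gi = 1\<^sub>m n"
    and pinv: "pinv C = Gi * mat_adjoint C"
    using gram_inverse by blast
  define w where "w = mat_adjoint C *\<^sub>v a"
  have w: "w \<in> carrier_vec n" using mat_adjoint_carrier[OF C] a unfolding w_def by auto
  have "complex_of_real (vnorm2 ((1\<^sub>m m - C * pinv C) *\<^sub>v a))
      = complex_of_real (vnorm2 a) - hprod w (Gi *\<^sub>v w)"
    using residual_hprod[OF Gi inv pinv a a] unfolding hprod_self w_def .
  hence "vnorm2 ((1\<^sub>m m - C * pinv C) *\<^sub>v a) = vnorm2 a - Re (hprod w (Gi *\<^sub>v w))"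
    by (metis Re_complex_of_real minus_complex.sel(1))
  moreover have "Re (hprod w (Gi *\<^sub>v w)) \<le> W / lm"
    using gram_inverse_bounds[OF Gi inv w] divide_right_mono[OF Wa, of lm] lm
    unfolding w_def by simp
  ultimately show ?thesis by linarith
qed

end

lemma finite_index_pairs:
  fixes a b :: nat
  shows "finite {f k l | k l. k < a \<and> l < b \<and> P k l}"
proof -
  have "{f k l | k l. k < a \<and> l < b \<and> P k l} \<subseteq> (\<lambda>(k,l). f k l) ` ({..<a} \<times> {..<b})" by auto
  thus ?thesis by (rule finite_subset) (rule finite_imageI; simp)
qed

lemma mu_self_ge:
  "k < dim_col A \<Longrightarrow> l < dim_col A \<Longrightarrow> k \<noteq> l \<Longrightarrow> cmod (hprod (col A k) (col A l)) \<le> mu_self A"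
  unfolding mu_self_def
  by (rule Max_ge) (use finite_index_pairs[of "\<lambda>k l. cmod (hprod (col A k) (col A l))"
      "dim_col A" "dim_col A" "\<lambda>k l. k \<noteq> l"] in auto)

lemma mu_self_nonneg: "mu_self A \<ge> 0"
  unfolding mu_self_def
  by (rule Max_ge) (use finite_index_pairs[of "\<lambda>k l. cmod (hprod (col A k) (col A l))"
      "dim_col A" "dim_col A" "\<lambda>k l. k \<noteq> l"] in auto)

lemma mu_mutual_ge:
  "k < dim_col A \<Longrightarrow> l < dim_col B \<Longrightarrow> cmod (hprod (col A k) (col B l)) \<le> mu_mutual A B"
  unfolding mu_mutual_def
  by (rule Max_ge) (use finite_index_pairs[of "\<lambda>k l. cmod (hprod (col A k) (col B l))"
      "dim_col A" "dim_col B" "\<lambda>k l. True"] in auto)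

lemma col_submat_carrier: "finite E \<Longrightarrow> col_submat B E \<in> carrier_mat (dim_row B) (card E)"
  unfolding col_submat_def by auto

lemma col_col_submat:
  "finite E \<Longrightarrow> k < card E \<Longrightarrow> col (col_submat B E) k = col B (sorted_list_of_set E ! k)"
  unfolding col_submat_def by (subst col_mat_of_cols) auto

lemma gram_col_submat_lower_bound:
  assumes unit: "\<And>l. l < dim_col B \<Longrightarrow> vnorm2 (col B l) = 1"
    and E: "E \<subseteq> {0..<dim_col B}" and x: "x \<in> carrier_vec (card E)"
  shows "(1 - mu_self B * (real (card E) - 1)) * vnorm2 x
           \<le> Re (hprod x ((mat_adjoint (col_submat B E) * col_submat B E) *\<^sub>v x))"
proof -
  define n where "n = card E"
  define s where "s = sorted_list_of_set E"
  define G where "G = mat_adjoint (col_submat B E) * col_submat B E"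
  have fin: "finite E" using E finite_subset by blast
  have Be: "col_submat B E \<in> carrier_mat (dim_row B) n"
    unfolding n_def using col_submat_carrier[OF fin] .
  have G: "G \<in> carrier_mat n n" unfolding G_def using Be mat_adjoint_carrier[OF Be] by auto
  have s: "length s = n" "distinct s" "set s = E" unfolding s_def n_def using fin by auto
  have s_col: "s ! k < dim_col B" if "k < n" for k
    using E nth_mem[of k s] that s by auto
  have Gkl: "G $$ (k,l) = hprod (col B (s!k)) (col B (s!l))" if "k < n" "l < n" for k l
    unfolding G_def gram_index[OF Be that] using col_col_submat[OF fin] that
    by (simp add: n_def s_def)
  have "hprod x (G *\<^sub>v x) = (\<Sum>k<n. cnj (x $ k) * (\<Sum>l<n. G $$ (k,l) * x $ l))"
    using x G
    by (auto simp: n_def hprod_def scalar_prod_def mult_mat_vec_def row_def lessThan_atLeast0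
        intro!: sum.cong)
  moreover have "vnorm2 x = (\<Sum>k<n. (cmod (x $ k))^2)" using x unfolding vnorm2_def n_def by simp
  moreover have "(1 - mu_self B * (real n - 1)) * (\<Sum>k<n. (cmod (x $ k))^2)
      \<le> Re (\<Sum>k<n. cnj (x $ k) * (\<Sum>l<n. G $$ (k,l) * x $ l))"
  proof (rule quadratic_form_lower_bound)
    show "G $$ (k, k) = 1" if "k < n" for k
      using Gkl[OF that that] hprod_self unit s_col[OF that] by simp
    show "cmod (G $$ (k, l)) \<le> mu_self B" if "k < n" "l < n" "k \<noteq> l" for k l
      using Gkl that mu_self_ge[OF s_col s_col] nth_eq_iff_index_eq[OF s(2), of k l] s(1) by auto
  qed (rule mu_self_nonneg)
  ultimately show ?thesis unfolding G_def n_def by simp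
qed

lemma adjoint_col_submat_bound:
  assumes fin: "finite E" and a: "a \<in> carrier_vec (dim_row B)"
    and c: "\<And>l. l \<in> E \<Longrightarrow> cmod (hprod (col B l) a) \<le> c"
  shows "vnorm2 (mat_adjoint (col_submat B E) *\<^sub>v a) \<le> real (card E) * c^2"
proof -
  define s where "s = sorted_list_of_set E"
  have Be: "col_submat B E \<in> carrier_mat (dim_row B) (card E)" using col_submat_carrier[OF fin] .
  have s_mem: "s ! k \<in> E" if "k < card E" for k
    using nth_mem[of k s] fin that unfolding s_def by auto
  have entry: "(mat_adjoint (col_submat B E) *\<^sub>v a) $ k = hprod (col B (s ! k)) a" if "k < card E" for k
    using mat_adjoint_mult_vec_index[OF Be a that] col_col_submat[OF fin that] unfolding s_def by simp
  have "vnorm2 (mat_adjoint (col_submat B E) *\<^sub>v a)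
      = (\<Sum>k<card E. (cmod ((mat_adjoint (col_submat B E) *\<^sub>v a) $ k))^2)"
    unfolding vnorm2_def using mat_adjoint_carrier[OF Be] by simp
  also have "\<dots> = (\<Sum>k<card E. (cmod (hprod (col B (s ! k)) a))^2)"
    by (intro sum.cong refl) (metis entry lessThan_iff)
  also have "\<dots> \<le> (\<Sum>k<card E. c^2)"
    using c s_mem by (intro sum_mono) (simp add: power_mono)
  finally show ?thesis by simp
qed

lemma adjoint_col_submat_mutual_bound:
  assumes A: "A \<in> carrier_mat m na" and B: "B \<in> carrier_mat m nb"
    and E: "E \<subseteq> {0..<nb}" and i: "i < na"
  shows "vnorm2 (mat_adjoint (col_submat B E) *\<^sub>v col A i) \<le> real (card E) * (mu_mutual A B)^2"
proof (rule adjoint_col_submat_bound)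
  show "finite E" using E finite_subset by blast
  show "col A i \<in> carrier_vec (dim_row B)" using A B by (metis carrier_matD(1) col_dim)
  show "cmod (hprod (col B l) (col A i)) \<le> mu_mutual A B" if "l \<in> E" for l
  proof -
    have "l < dim_col B" "col B l \<in> carrier_vec m" "col A i \<in> carrier_vec m"
      using A B E that by auto
    thus ?thesis using mu_mutual_ge[of i A l B] hprod_cmod_sym[of "col A i" m "col B l"] A i by simp
  qed
qed

theorem mainTheorem9:
  fixes A B :: "complex mat" and M Na Nb :: nat and E :: "nat set"
  assumes "A \<in> carrier_mat M Na" and "B \<in> carrier_mat M Nb"
    and "\<forall>k<Na. vnorm2 (col A k) = 1"
    and "\<forall>l<Nb. vnorm2 (col B l) = 1"
    and "E \<subseteq> {0..<Nb}"
    and "1 - mu_self B * (real (card E) - 1) > 0"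
  shows "(\<forall>i<Na. \<forall>j<Na. i \<noteq> j \<longrightarrow>
           cmod (hprod (resid_proj B E *\<^sub>v col A i) (resid_proj B E *\<^sub>v col A j))
             \<le> mu_self A + real (card E) * (mu_mutual A B)^2 / (1 - mu_self B * (real (card E) - 1))) \<and>
         (\<forall>i<Na. vnorm2 (resid_proj B E *\<^sub>v col A i)
             \<ge> 1 - real (card E) * (mu_mutual A B)^2 / (1 - mu_self B * (real (card E) - 1)))"
proof -
  note A = assms(1) and B = assms(2) and A_unit = assms(3) and E = assms(5)
  define Be where "Be = col_submat B E"
  define lm where "lm = 1 - mu_self B * (real (card E) - 1)"
  define W where "W = real (card E) * (mu_mutual A B)^2"
  have lm_pos: "lm > 0" using assms(6) unfolding lm_def .
  have fin: "finite E" using E finite_subset by blast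
  have Be_carrier: "Be \<in> carrier_mat M (card E)"
    using col_submat_carrier[OF fin, of B] B unfolding Be_def by simp
  have R: "resid_proj B E = 1\<^sub>m M - Be * pinv Be" using B unfolding resid_proj_def Be_def by simp
  have gram: "lm * vnorm2 x \<le> Re (hprod x ((mat_adjoint Be * Be) *\<^sub>v x))"
    if "x \<in> carrier_vec (card E)" for x
    using gram_col_submat_lower_bound[of B E x] assms(4) B E that unfolding lm_def Be_def by simp
  have col_A: "col A i \<in> carrier_vec M" for i using A by (metis carrier_matD(1) col_dim)
  have W: "vnorm2 (mat_adjoint Be *\<^sub>v col A i) \<le> W" if "i < Na" for i
    using adjoint_col_submat_mutual_bound[OF A B E that] unfolding Be_def W_def .
  have cross: "cmod (hprod (resid_proj B E *\<^sub>v col A i) (resid_proj B E *\<^sub>v col A j)) \<le> mu_self A + W / lm"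
    if "i < Na" "j < Na" "i \<noteq> j" for i j
  proof -
    have "cmod (hprod (col A i) (col A j)) \<le> mu_self A" using mu_self_ge[of i A j] A that by simp
    thus ?thesis
      using residual_cross_bound[OF Be_carrier lm_pos gram col_A col_A W[OF that(1)] W[OF that(2)]]
      unfolding R by linarith
  qed
  have norm: "1 - W / lm \<le> vnorm2 (resid_proj B E *\<^sub>v col A i)" if "i < Na" for i
    using residual_norm_bound[OF Be_carrier lm_pos gram col_A W[OF that]] A_unit that unfolding R by simp
  show ?thesis
    unfolding W_def[symmetric] lm_def[symmetric] using cross norm by auto
qed

end
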